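(* Let $\omega_1,\dots,\omega_n$ be positive reals with $\sum_{k\in[n]}\omega_k=1$ and $r_1,\dots,r_n$ positive reals. For each $k$ let $\theta_k=\arccos(\omega_k/2)$, so $\omega_k=e^{i\theta_k}+e^{-i\theta_k}$, and set $a_{k,j}=r_ke^{ij\theta_k}$ for $(k,j)\in[n]\times\{\pm1\}$. Then: (1) ${}^{\infty,0}\!\sum_{(k,j)}a_{k,j}=\max\{|r_k|:k\in[n]\}$; (2) ${}^{-\infty,0}\!\sum_{(k,j)}a_{k,j}=\min\{|r_k|:k\in[n]\}$; (3) ${}^{0,0}\!\sum_{(k,j)}a_{k,j}=\prod_{k\in[n]}r_k^{\omega_k}$; (4) for every real $\alpha\neq0$, ${}^{\alpha}\!\sum_{(k,j)}a_{k,j}=\big(\sum_{k\in[n]}\omega_kr_k^\alpha\big)^{1/\alpha}$.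
   Context: For $\alpha\in\mathbb{C}\setminus i\mathbb{R}$, $\epsilon_\alpha(0)=0$ and $\epsilon_\alpha(rs)=r^\alpha s$ for $r>0$, $|s|=1$; it is a bijection of $\mathbb{C}$. For a finite family $(a_t)$ in $\mathbb{C}$: ${}^{\alpha}\!\sum_t a_t:=\epsilon_\alpha^{-1}\big(\sum_t\epsilon_\alpha(a_t)\big)$; ${}^{\infty,0}\!\sum_ta_t:=\lim_{\alpha\to+\infty}{}^{\alpha}\!\sum_ta_t$ and ${}^{0,0}\!\sum_ta_t:=\lim_{\alpha\to0^+}{}^{\alpha}\!\sum_ta_t$ (limits over real $\alpha>0$); ${}^{-\infty,0}\!\sum_ta_t:=\lim_{\alpha\to-\infty}{}^{\alpha}\!\sum_ta_t$ (limit over real $\alpha<0$). *)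

theory Defs
  imports "HOL-Analysis.Analysis"
begin

definition eps :: "complex \<Rightarrow> complex \<Rightarrow> complex" where
  "eps \<alpha> z = (if z = 0 then 0 else (complex_of_real (cmod z)) powr \<alpha> * sgn z)"

definition alpha_sum :: "complex \<Rightarrow> 'a set \<Rightarrow> ('a \<Rightarrow> complex) \<Rightarrow> complex" where
  "alpha_sum \<alpha> A a = (THE w. eps \<alpha> w = (\<Sum>t\<in>A. eps \<alpha> (a t)))"

end

theory Submission
  imports Defs
begin

text \<open>
  Since eps_alpha (r u) = r^alpha u for r > 0 and norm u = 1, the two points a(k,1) and a(k,-1)
  contribute r_k^alpha (e^(i theta_k) + e^(-i theta_k)) = omega_k r_k^alpha. Hence the eps-images
  sum to the positive real S(alpha) = sum_k omega_k r_k^alpha, and the alpha-sum is the weighted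
  power mean M_alpha(r) = S(alpha)^(1/alpha). The limits are those of power means: the squeeze
  omega_k0^(1/alpha) max r <= M_alpha(r) <= max r as alpha tends to infinity, the duality
  M_(-alpha)(r) = 1 / M_alpha(1/r) for the minimum, and, because S(0) = 1, ln M_alpha(r) =
  ln S(alpha) / alpha is a difference quotient of ln S at 0, tending to sum_k omega_k ln r_k.
\<close>

lemma eps_of_real_mult_unit:
  fixes \<alpha> r :: real
  assumes "r > 0" and "norm u = 1"
  shows "eps (of_real \<alpha>) (of_real r * u) = of_real (r powr \<alpha>) * u"
proof -
  have "u \<noteq> 0" using assms(2) by auto
  moreover have "sgn u = u" using assms(2) by (simp add: sgn_div_norm)
  ultimately show ?thesis
    using assms by (simp add: eps_def norm_mult sgn_mult sgn_of_real powr_of_real)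
qed

lemma eps_eq_of_real_pos_iff:
  fixes \<alpha> S :: real
  assumes "\<alpha> \<noteq> 0" and "S > 0"
  shows "eps (of_real \<alpha>) w = of_real S \<longleftrightarrow> w = of_real (S powr (1 / \<alpha>))"
proof
  assume eq: "eps (of_real \<alpha>) w = of_real S"
  then have "w \<noteq> 0" using assms by (auto simp: eps_def)
  then have polar: "w = of_real (cmod w) * sgn w" and unit: "norm (sgn w) = 1"
    by (simp add: complex_sgn_def scaleR_conv_of_real, simp add: norm_sgn)
  have image: "of_real (cmod w powr \<alpha>) * sgn w = of_real S"
    using eq \<open>w \<noteq> 0\<close> eps_of_real_mult_unit[OF _ unit, of "cmod w" \<alpha>] polar by simp
  have modulus: "cmod w powr \<alpha> = S"
    using arg_cong[OF image, of norm] unit assms(2) by (simp add: norm_mult)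
  then have "cmod w = S powr (1 / \<alpha>)"
    using assms(1) by (metis powr_powr norm_ge_zero powr_one right_inverse divide_inverse mult_1)
  moreover have "sgn w = 1"
    using image modulus assms(2) by simp
  ultimately show "w = of_real (S powr (1 / \<alpha>))"
    using polar assms(1) by (simp add: powr_powr)
next
  assume "w = of_real (S powr (1 / \<alpha>))"
  then show "eps (of_real \<alpha>) w = of_real S"
    using eps_of_real_mult_unit[of "S powr (1 / \<alpha>)" 1 \<alpha>] assms by (simp add: powr_powr)
qed

lemma alpha_sum_of_real_pos:
  fixes \<alpha> S :: real
  assumes "\<alpha> \<noteq> 0" and "S > 0" and "(\<Sum>t\<in>A. eps (of_real \<alpha>) (a t)) = of_real S"
  shows "alpha_sum (of_real \<alpha>) A a = of_real (S powr (1 / \<alpha>))"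
  unfolding alpha_sum_def assms(3) eps_eq_of_real_pos_iff[OF assms(1,2)] by simp

lemma exp_arccos_conjugate_sum:
  fixes x :: real
  assumes "\<bar>x\<bar> \<le> 2"
  shows "exp (- \<i> * of_real (arccos (x / 2))) + exp (\<i> * of_real (arccos (x / 2))) = of_real x"
proof -
  have "cos (of_real (arccos (x / 2))) = (of_real (x / 2) :: complex)"
    using assms by (simp add: cos_of_real cos_arccos)
  then have "(exp (\<i> * of_real (arccos (x / 2))) + exp (- (\<i> * of_real (arccos (x / 2))))) / 2
      = of_real x / 2"
    by (simp add: cos_exp_eq)
  then show ?thesis
    unfolding divide_cancel_right by (simp add: add.commute)
qed

lemma eps_sum_conjugate_pairs:
  fixes \<omega> r :: "'a \<Rightarrow> real" and \<alpha> :: real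
  assumes "\<And>k. k \<in> K \<Longrightarrow> \<bar>\<omega> k\<bar> \<le> 2" and "\<And>k. k \<in> K \<Longrightarrow> r k > 0"
  shows "(\<Sum>(k, j)\<in>K \<times> {-1, 1::int}.
            eps (of_real \<alpha>) (of_real (r k) * exp (\<i> * of_int j * of_real (arccos (\<omega> k / 2)))))
    = of_real (\<Sum>k\<in>K. \<omega> k * r k powr \<alpha>)"
proof -
  have "(\<Sum>j\<in>{-1, 1::int}. eps (of_real \<alpha>) (of_real (r k) * exp (\<i> * of_int j * of_real (arccos (\<omega> k / 2)))))
      = of_real (\<omega> k * r k powr \<alpha>)" if "k \<in> K" for k
  proof -
    have "norm (exp (\<i> * of_int j * of_real \<theta>)) = 1" for j :: int and \<theta> :: real
      by (metis norm_exp_i_times mult.assoc of_real_of_int_eq of_real_mult)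
    then have "(\<Sum>j\<in>{-1, 1::int}. eps (of_real \<alpha>) (of_real (r k) * exp (\<i> * of_int j * of_real (arccos (\<omega> k / 2)))))
        = of_real (r k powr \<alpha>) * (exp (- \<i> * of_real (arccos (\<omega> k / 2))) + exp (\<i> * of_real (arccos (\<omega> k / 2))))"
      using assms(2)[OF that] by (simp add: eps_of_real_mult_unit distrib_left)
    also have "\<dots> = of_real (\<omega> k * r k powr \<alpha>)"
      using exp_arccos_conjugate_sum[OF assms(1)[OF that]] by simp
    finally show ?thesis .
  qed
  then show ?thesis
    by (simp add: sum.cartesian_product[symmetric])
qed

definition power_mean :: "('a \<Rightarrow> real) \<Rightarrow> ('a \<Rightarrow> real) \<Rightarrow> 'a set \<Rightarrow> real \<Rightarrow> real" where
  "power_mean \<omega> r K \<alpha> = (\<Sum>k\<in>K. \<omega> k * r k powr \<alpha>) powr (1 / \<alpha>)"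

lemma power_mean_uminus:
  "power_mean \<omega> r K (- \<alpha>) = inverse (power_mean \<omega> (\<lambda>k. inverse (r k)) K \<alpha>)"
  by (simp add: power_mean_def powr_minus inverse_powr)

locale weighted_family =
  fixes K :: "'a set" and \<omega> r :: "'a \<Rightarrow> real"
  assumes finite_K: "finite K"
    and weight_pos: "\<And>k. k \<in> K \<Longrightarrow> \<omega> k > 0"
    and weight_sum: "(\<Sum>k\<in>K. \<omega> k) = 1"
    and value_pos: "\<And>k. k \<in> K \<Longrightarrow> r k > 0"
begin

lemma K_nonempty: "K \<noteq> {}"
  using weight_sum by auto

lemma weight_le_one: "k \<in> K \<Longrightarrow> \<omega> k \<le> 1"
  using finite_K weight_pos weight_sum member_le_sum[of k K \<omega>] by (simp add: less_imp_le)

lemma weighted_term_le_sum: "k \<in> K \<Longrightarrow> \<omega> k * r k powr \<alpha> \<le> (\<Sum>k\<in>K. \<omega> k * r k powr \<alpha>)"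
  using finite_K weight_pos by (intro member_le_sum mult_nonneg_nonneg) (auto intro: less_imp_le)

lemma weighted_sum_pos: "(\<Sum>k\<in>K. \<omega> k * r k powr \<alpha>) > 0"
proof -
  have "\<omega> k * r k powr \<alpha> > 0" if "k \<in> K" for k
    using weight_pos[OF that] value_pos[OF that] by simp
  then show ?thesis
    using finite_K K_nonempty by (intro sum_pos)
qed

lemma weighted_sum_le_const:
  assumes "\<And>k. k \<in> K \<Longrightarrow> r k powr \<alpha> \<le> c"
  shows "(\<Sum>k\<in>K. \<omega> k * r k powr \<alpha>) \<le> c"
proof -
  have "(\<Sum>k\<in>K. \<omega> k * r k powr \<alpha>) \<le> (\<Sum>k\<in>K. \<omega> k * c)"
    using assms weight_pos by (intro sum_mono mult_left_mono) (auto intro: less_imp_le)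
  also have "\<dots> = c"
    using weight_sum by (simp add: sum_distrib_right[symmetric])
  finally show ?thesis .
qed

lemma power_mean_tendsto_Max: "(power_mean \<omega> r K \<longlongrightarrow> Max (r ` K)) at_top"
proof -
  have "Max (r ` K) \<in> r ` K"
    using finite_K K_nonempty by (intro Max_in) auto
  then obtain k0 where k0: "k0 \<in> K" and max: "Max (r ` K) = r k0"
    by auto
  have le_max: "r k \<le> r k0" if "k \<in> K" for k
    using finite_K that max by (metis Max_ge finite_imageI imageI)
  have w0: "\<omega> k0 > 0" and r0: "r k0 > 0"
    using k0 weight_pos value_pos by auto
  show ?thesis
  proof (rule tendsto_sandwich)
    show "((\<lambda>\<alpha>. \<omega> k0 powr (1 / \<alpha>) * r k0) \<longlongrightarrow> Max (r ` K)) at_top"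
    proof -
      have "((\<lambda>\<alpha>::real. \<omega> k0 powr (1 / \<alpha>) * r k0) \<longlongrightarrow> \<omega> k0 powr 0 * r k0) at_top"
        using w0 by (intro tendsto_intros tendsto_divide_0[OF tendsto_const]
            filterlim_at_top_imp_at_infinity[OF filterlim_ident]) auto
      then show ?thesis using w0 max by simp
    qed
    show "\<forall>\<^sub>F \<alpha> in at_top. \<omega> k0 powr (1 / \<alpha>) * r k0 \<le> power_mean \<omega> r K \<alpha>"
      using eventually_gt_at_top[of 0]
    proof eventually_elim
      case (elim \<alpha>)
      have "\<omega> k0 powr (1 / \<alpha>) * r k0 = (\<omega> k0 * r k0 powr \<alpha>) powr (1 / \<alpha>)"
        using elim w0 r0 by (simp add: powr_mult powr_powr)
      also have "\<dots> \<le> power_mean \<omega> r K \<alpha>"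
        unfolding power_mean_def using elim w0 r0 k0
        by (intro powr_mono2 weighted_term_le_sum) auto
      finally show ?case .
    qed
    show "\<forall>\<^sub>F \<alpha> in at_top. power_mean \<omega> r K \<alpha> \<le> Max (r ` K)"
      using eventually_gt_at_top[of 0]
    proof eventually_elim
      case (elim \<alpha>)
      have "(\<Sum>k\<in>K. \<omega> k * r k powr \<alpha>) \<le> r k0 powr \<alpha>"
        using elim value_pos le_max
        by (intro weighted_sum_le_const powr_mono2) (auto intro: less_imp_le)
      then have "power_mean \<omega> r K \<alpha> \<le> (r k0 powr \<alpha>) powr (1 / \<alpha>)"
        unfolding power_mean_def using elim weighted_sum_pos by (intro powr_mono2) (auto intro: less_imp_le)
      then show ?case
        using elim r0 max by (simp add: powr_powr)
    qed
  qed simp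
qed

lemma power_mean_tendsto_Min: "(power_mean \<omega> r K \<longlongrightarrow> Min (r ` K)) at_bot"
proof -
  interpret inverse: weighted_family K \<omega> "\<lambda>k. inverse (r k)"
    using finite_K weight_pos weight_sum value_pos by unfold_locales auto
  have min_in: "Min (r ` K) \<in> r ` K"
    using finite_K K_nonempty by (intro Min_in) auto
  then have min_pos: "Min (r ` K) > 0"
    using value_pos by auto
  have min_le: "Min (r ` K) \<le> r k" if "k \<in> K" for k
    using finite_K that by (intro Min_le) auto
  have "Max ((\<lambda>k. inverse (r k)) ` K) = inverse (Min (r ` K))"
  proof (rule Max_eqI)
    show "finite ((\<lambda>k. inverse (r k)) ` K)"
      using finite_K by simp
    show "y \<le> inverse (Min (r ` K))" if "y \<in> (\<lambda>k. inverse (r k)) ` K" for y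
      using that min_le min_pos by (auto intro: le_imp_inverse_le)
    show "inverse (Min (r ` K)) \<in> (\<lambda>k. inverse (r k)) ` K"
      using min_in by auto
  qed
  then have "(power_mean \<omega> (\<lambda>k. inverse (r k)) K \<longlongrightarrow> inverse (Min (r ` K))) at_top"
    using inverse.power_mean_tendsto_Max by simp
  from tendsto_inverse[OF this]
  have "((\<lambda>\<alpha>. inverse (power_mean \<omega> (\<lambda>k. inverse (r k)) K \<alpha>)) \<longlongrightarrow> Min (r ` K)) at_top"
    using min_pos by simp
  then show ?thesis
    by (subst filterlim_at_bot_mirror) (simp add: power_mean_uminus)
qed

lemma weighted_sum_has_real_derivative:
  "((\<lambda>\<alpha>. \<Sum>k\<in>K. \<omega> k * r k powr \<alpha>) has_real_derivative (\<Sum>k\<in>K. \<omega> k * ln (r k) * r k powr \<alpha>)) (at \<alpha>)"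
  using has_real_derivative_const_powr[where f = "\<lambda>x. x" and f' = "\<lambda>_. 1", OF DERIV_ident]
  by (auto intro!: DERIV_sum DERIV_cmult simp: mult.assoc)

lemma power_mean_tendsto_geometric_mean: "(power_mean \<omega> r K \<longlongrightarrow> (\<Prod>k\<in>K. r k powr \<omega> k)) (at 0)"
proof -
  define S where "S \<alpha> = (\<Sum>k\<in>K. \<omega> k * r k powr \<alpha>)" for \<alpha>
  define D where "D = (\<Sum>k\<in>K. \<omega> k * ln (r k))"
  have S0: "S 0 = 1"
    unfolding S_def weight_sum[symmetric] using value_pos by (intro sum.cong) force+
  have "(\<Sum>k\<in>K. \<omega> k * ln (r k) * r k powr 0) = D"
    unfolding D_def using value_pos by (intro sum.cong) force+
  then have "(S has_real_derivative D) (at 0)"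
    using weighted_sum_has_real_derivative[of 0] unfolding S_def[abs_def] by simp
  from DERIV_chain2[OF DERIV_ln_divide this] S0
  have "((\<lambda>\<alpha>. ln (S \<alpha>)) has_real_derivative D) (at 0)"
    by simp
  then have "((\<lambda>\<alpha>. ln (S \<alpha>) / \<alpha>) \<longlongrightarrow> D) (at 0)"
    using S0 by (simp add: has_field_derivative_iff)
  then have "((\<lambda>\<alpha>. exp (ln (S \<alpha>) / \<alpha>)) \<longlongrightarrow> exp D) (at 0)"
    by (rule tendsto_exp)
  moreover have "exp (ln (S \<alpha>) / \<alpha>) = power_mean \<omega> r K \<alpha>" for \<alpha>
    using weighted_sum_pos[of \<alpha>] by (simp add: power_mean_def S_def powr_def)
  moreover have "exp D = (\<Prod>k\<in>K. r k powr \<omega> k)"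
    unfolding D_def exp_sum[OF finite_K] using value_pos
    by (intro prod.cong) (force simp: powr_def mult.commute)+
  ultimately show ?thesis
    by simp
qed

end

theorem proposition10p1:
  fixes n :: nat and \<omega> r :: "nat \<Rightarrow> real"
  assumes \<omega>_pos: "\<forall>k\<in>{1..n}. \<omega> k > 0"
    and \<omega>_sum: "(\<Sum>k\<in>{1..n}. \<omega> k) = 1"
    and r_pos: "\<forall>k\<in>{1..n}. r k > 0"
  defines "a \<equiv> (\<lambda>(k, j::int). complex_of_real (r k) * exp (\<i> * of_int j * complex_of_real (arccos (\<omega> k / 2))))"
    and "I \<equiv> {1..n} \<times> {-1, 1::int}"
  shows "(((\<lambda>\<alpha>::real. alpha_sum (complex_of_real \<alpha>) I a)
            \<longlongrightarrow> complex_of_real (Max {\<bar>r k\<bar> | k. k \<in> {1..n}})) at_top)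
    \<and> (((\<lambda>\<alpha>::real. alpha_sum (complex_of_real \<alpha>) I a)
            \<longlongrightarrow> complex_of_real (Min {\<bar>r k\<bar> | k. k \<in> {1..n}})) at_bot)
    \<and> (((\<lambda>\<alpha>::real. alpha_sum (complex_of_real \<alpha>) I a)
            \<longlongrightarrow> complex_of_real (\<Prod>k\<in>{1..n}. r k powr \<omega> k)) (at_right 0))
    \<and> (\<forall>\<alpha>::real. \<alpha> \<noteq> 0 \<longrightarrow> alpha_sum (complex_of_real \<alpha>) I a
            = complex_of_real ((\<Sum>k\<in>{1..n}. \<omega> k * r k powr \<alpha>) powr (1 / \<alpha>)))"
proof -
  interpret weighted_family "{1..n}" \<omega> r
    using \<omega>_pos \<omega>_sum r_pos by unfold_locales auto
  have "\<bar>\<omega> k\<bar> \<le> 2" if "k \<in> {1..n}" for k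
    using weight_pos[OF that] weight_le_one[OF that] by simp
  then have "(\<Sum>t\<in>I. eps (of_real \<alpha>) (a t)) = of_real (\<Sum>k\<in>{1..n}. \<omega> k * r k powr \<alpha>)" for \<alpha> :: real
    unfolding I_def a_def using value_pos
    by (subst eps_sum_conjugate_pairs[symmetric]) (auto simp: case_prod_unfold)
  then have closed_form: "alpha_sum (of_real \<alpha>) I a = of_real (power_mean \<omega> r {1..n} \<alpha>)"
    if "\<alpha> \<noteq> 0" for \<alpha> :: real
    unfolding power_mean_def using that weighted_sum_pos by (intro alpha_sum_of_real_pos)
  have limit: "((\<lambda>\<alpha>. alpha_sum (of_real \<alpha>) I a) \<longlongrightarrow> of_real L) F"
    if "(power_mean \<omega> r {1..n} \<longlongrightarrow> L) F" and "\<forall>\<^sub>F \<alpha> in F. \<alpha> \<noteq> 0" for F L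
  proof (rule Lim_transform_eventually)
    show "((\<lambda>\<alpha>. complex_of_real (power_mean \<omega> r {1..n} \<alpha>)) \<longlongrightarrow> of_real L) F"
      using that(1) by (rule tendsto_of_real)
    show "\<forall>\<^sub>F \<alpha> in F. of_real (power_mean \<omega> r {1..n} \<alpha>) = alpha_sum (of_real \<alpha>) I a"
      using that(2) by eventually_elim (simp add: closed_form)
  qed
  have "\<forall>\<^sub>F \<alpha> in at_top. \<alpha> \<noteq> (0::real)" and "\<forall>\<^sub>F \<alpha> in at_bot. \<alpha> \<noteq> (0::real)"
    using eventually_gt_at_top[of 0] eventually_gt_at_bot[of 0] by (auto elim: eventually_mono)
  moreover have "{\<bar>r k\<bar> | k. k \<in> {1..n}} = r ` {1..n}"
    using value_pos by force
  ultimately show ?thesis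
    using limit[OF power_mean_tendsto_Max] limit[OF power_mean_tendsto_Min]
      limit[OF tendsto_within_subset[OF power_mean_tendsto_geometric_mean] eventually_neq_at_within]
      closed_form
    by (auto simp: power_mean_def)
qed

end
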